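(* Assume $h$ satisfies Assumption 1. If $B^s\ge B^d+1$, then $\hat B^d=B^d$ and $\hat\epsilon(x,i)=0$ for all $i\in\{0,1\}$ and $x=0,1,\dots,B^s$.
   Context: Parameters: $\lambda>0$, $0<\mu_l<\mu_h$, $\delta=\mu_h-\mu_l$, $\Lambda=\lambda+\mu_h$, $R\ge 0$, $c>0$, discount rate $\beta>0$ with the normalization $\Lambda+\beta=1$, and $h:\{0,1,2,\dots\}\to\mathbb{R}$ nondecreasing and convex with $h(0)=0$. Assumption 1: (1) there is $\theta>1$ with $h(x+1)\le\theta h(x)$ for all $x>0$; (2) there exist $\gamma\in[0,1)$ and a positive integer $J$ with $\left(\frac{\Lambda}{\Lambda+\beta}\right)^J[R+c+h(x+J)]\le\gamma[R+c+h(x)]$ for all $x\ge0$. Combined problem finite-horizon values on $S=\{0,1,\dots\}\times\{0,1\}$: $v_0\equiv0$, $v_{n+1}(0,0)=\lambda v_n(0,1)+\mu_h v_n(0,0)$; $v_{n+1}(x,0)=-h(x)+\lambda v_n(x,1)+\mu_l v_n(x-1,0)+\max\{\delta v_n(x,0),-c+\delta v_n(x-1,0)\}$ for $x\ge1$; $v_{n+1}(x,1)=\max\{R+v_{n+1}(x+1,0),v_{n+1}(x,0)\}$. Admission-control subproblem: $\hat v$ defined identically except that the max in the $(x,0)$ equation is replaced by $\delta\hat v_n(x,0)$ (service rate always $\mu_l$). Infinite-horizon values: $v=\lim_n v_n$ and $\hat v=\lim_n\hat v_n$ (pointwise limits, which exist under Assumption 1); they are the optimal infinite-horizon discounted profits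 of the combined problem and of the admission control subproblem. $\hat\epsilon(x,i)=v(x,i)-\hat v(x,i)$ (value of service flexibility). With $\Delta(x,0)=v(x,0)-v(x+1,0)$, $\hat\Delta(x,0)=\hat v(x,0)-\hat v(x+1,0)$ and $T_f(\theta)=\sup\{k\ge0:f(k)\le\theta\}$ ($\sup\emptyset=-1$, $+\infty$ allowed), the stationary optimal thresholds are $B^s=1+T_{\Delta(\cdot,0)}(c/\delta)$ (high rate used in states $x>B^s$, low rate otherwise), $B^d=T_{\Delta(\cdot,0)}(R)$ (admit iff $x\le B^d$) for the combined problem, and $\hat B^d=T_{\hat\Delta(\cdot,0)}(R)$ for the subproblem. *)

theory Defs
  imports "HOL-Analysis.Analysis"
begin

text \<open>States are pairs (x,i) with i \<in> {0,1}; i = 0 is encoded as 0, any other i as 1.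
  The flag flex = True gives the combined problem (choice of service rate),
  flex = False gives the admission-control subproblem (rate always mu_l).\<close>

primrec vval :: "bool \<Rightarrow> real \<Rightarrow> real \<Rightarrow> real \<Rightarrow> real \<Rightarrow> real \<Rightarrow> (nat \<Rightarrow> real)
                  \<Rightarrow> nat \<Rightarrow> nat \<times> nat \<Rightarrow> real" where
  "vval flex lam mul muh R c h 0 = (\<lambda>_. 0)"
| "vval flex lam mul muh R c h (Suc n) =
    (let V = vval flex lam mul muh R c h n;
         \<delta> = muh - mul;
         V0 = (\<lambda>x. if x = 0 then lam * V (0,1) + muh * V (0,0)
                   else - h x + lam * V (x,1) + mul * V (x-1,0)
                        + (if flex then max (\<delta> * V (x,0)) (- c + \<delta> * V (x-1,0))
                           else \<delta> * V (x,0)))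
     in (\<lambda>(x,i). if i = 0 then V0 x else max (R + V0 (x+1)) (V0 x)))"

definition vinf :: "bool \<Rightarrow> real \<Rightarrow> real \<Rightarrow> real \<Rightarrow> real \<Rightarrow> real \<Rightarrow> (nat \<Rightarrow> real)
                  \<Rightarrow> nat \<times> nat \<Rightarrow> real" where
  "vinf flex lam mul muh R c h s = lim (\<lambda>n. vval flex lam mul muh R c h n s)"

definition Tthr :: "(nat \<Rightarrow> real) \<Rightarrow> real \<Rightarrow> ereal" where
  "Tthr f \<theta> = (if {k. f k \<le> \<theta>} = {} then -1 else Sup ((\<lambda>k. ereal (real k)) ` {k. f k \<le> \<theta>}))"

definition Delta0 :: "(nat \<times> nat \<Rightarrow> real) \<Rightarrow> nat \<Rightarrow> real" where
  "Delta0 v x = v (x,0) - v (x+1,0)"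

definition Assumption1 :: "real \<Rightarrow> real \<Rightarrow> real \<Rightarrow> real \<Rightarrow> real \<Rightarrow> real \<Rightarrow> (nat \<Rightarrow> real) \<Rightarrow> bool" where
  "Assumption1 lam mul muh R c \<beta> h \<longleftrightarrow>
     (\<exists>\<theta>>1. \<forall>x>0. h (x+1) \<le> \<theta> * h x) \<and>
     (\<exists>\<gamma> J. 0 \<le> \<gamma> \<and> \<gamma> < 1 \<and> J > 0 \<and>
        (\<forall>x. ((lam + muh) / (lam + muh + \<beta>)) ^ J * (R + c + h (x + J)) \<le> \<gamma> * (R + c + h x)))"

end

theory Submission
  imports Defs
begin

text \<open>
  Let flex = v - v_sub be the value of service flexibility, where v and v_sub are the
  infinite-horizon values of the combined problem and of the admission-control subproblem.
  In every state x \<le> B^s the combined problem serves at the low rate, so subtracting the two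
  Bellman equations cancels the holding cost and gives
    flex(x,0) = \<lambda> flex(x,1) + \<mu>_l flex(x-1,0) + \<delta> flex(x,0),
  while flex(x,1) \<le> max(flex(x,0), flex(x+1,0)), and flex(x,1) \<le> flex(x,0) where the combined
  problem rejects, which by B^s \<ge> B^d + 1 is the case just beyond B^s.  Hence flex(\<cdot>,0) is a
  nonnegative subsolution with factor \<Lambda> = \<lambda> + \<mu>_h < 1 on {x. x \<le> B^s}, and a discrete maximum
  principle (using the growth control of Assumption 1) makes it vanish there.  Equality of the
  admission thresholds then follows from the monotonicity of the differences \<Delta>.
\<close>

text \<open>Nonincreasing and concave sequences: the structural property of the value functions
  v_n(\<cdot>,0) that makes the optimal policies thresholds.\<close>

definition decreasing_concave :: "(nat \<Rightarrow> real) \<Rightarrow> bool" where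
  "decreasing_concave f \<longleftrightarrow>
     (\<forall>y. 0 \<le> f y - f (Suc y) \<and> f y - f (Suc y) \<le> f (Suc y) - f (Suc (Suc y)))"

lemma decreasing_concaveI:
  assumes "\<And>y. 0 \<le> f y - f (Suc y)" and "\<And>y. f y - f (Suc y) \<le> f (Suc y) - f (Suc (Suc y))"
  shows "decreasing_concave f"
  using assms by (simp add: decreasing_concave_def)

lemma decreasing_concaveD:
  assumes "decreasing_concave f"
  shows "0 \<le> f y - f (Suc y)" and "f y - f (Suc y) \<le> f (Suc y) - f (Suc (Suc y))"
  using assms by (simp_all add: decreasing_concave_def)

lemma decreasing_concave_add:
  assumes f: "decreasing_concave f" and g: "decreasing_concave g"
  shows "decreasing_concave (\<lambda>y. f y + g y)"
proof (rule decreasing_concaveI)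
  fix y
  note df = decreasing_concaveD[OF f, of y] and dg = decreasing_concaveD[OF g, of y]
  show "0 \<le> f y + g y - (f (Suc y) + g (Suc y))" using df dg by linarith
  show "f y + g y - (f (Suc y) + g (Suc y)) \<le> f (Suc y) + g (Suc y) - (f (Suc (Suc y)) + g (Suc (Suc y)))"
    using df dg by linarith
qed

lemma decreasing_concave_scale:
  assumes f: "decreasing_concave f" and k: "0 \<le> k"
  shows "decreasing_concave (\<lambda>y. k * f y)"
proof (rule decreasing_concaveI)
  fix y
  note df = decreasing_concaveD[OF f, of y]
  show "0 \<le> k * f y - k * f (Suc y)"
    using mult_nonneg_nonneg[OF k df(1)] by (simp add: right_diff_distrib)
  show "k * f y - k * f (Suc y) \<le> k * f (Suc y) - k * f (Suc (Suc y))"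
    using mult_left_mono[OF df(2) k] by (simp add: right_diff_distrib)
qed

lemma decreasing_concave_const: "decreasing_concave (\<lambda>y. k)"
  by (simp add: decreasing_concave_def)

lemma decreasing_concave_shift:
  assumes f: "decreasing_concave f"
  shows "decreasing_concave (\<lambda>y. f (y - 1))"
proof (rule decreasing_concaveI)
  fix y
  show "0 \<le> f (y - 1) - f (Suc y - 1)"
    using decreasing_concaveD(1)[OF f, of "y - 1"] by (cases y) simp_all
  show "f (y - 1) - f (Suc y - 1) \<le> f (Suc y - 1) - f (Suc (Suc y) - 1)"
    using decreasing_concaveD[OF f, of "y - 1"] by (cases y) simp_all
qed

lemma decreasing_concave_admission:
  assumes f: "decreasing_concave f"
  shows "decreasing_concave (\<lambda>y. max (R + f (Suc y)) (f y))"
proof (rule decreasing_concaveI)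
  fix y
  note d0 = decreasing_concaveD[OF f, of y] and d1 = decreasing_concaveD[OF f, of "Suc y"]
  show "0 \<le> max (R + f (Suc y)) (f y) - max (R + f (Suc (Suc y))) (f (Suc y))"
    using d0 d1 by (auto simp: max_def)
  show "max (R + f (Suc y)) (f y) - max (R + f (Suc (Suc y))) (f (Suc y))
      \<le> max (R + f (Suc (Suc y))) (f (Suc y)) - max (R + f (Suc (Suc (Suc y)))) (f (Suc (Suc y)))"
    using d0 d1 by (auto simp: max_def)
qed

lemma decreasing_concave_rate_choice:
  assumes f: "decreasing_concave f"
  shows "decreasing_concave (\<lambda>y. max (f y) (- c + f (y - 1)))"
proof (rule decreasing_concaveI)
  fix y
  note d0 = decreasing_concaveD[OF f, of y] and d1 = decreasing_concaveD[OF f, of "Suc y"]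
    and ds = decreasing_concaveD[OF decreasing_concave_shift[OF f], of y]
  show "0 \<le> max (f y) (- c + f (y - 1)) - max (f (Suc y)) (- c + f (Suc y - 1))"
    using d0 ds by (auto simp: max_def)
  show "max (f y) (- c + f (y - 1)) - max (f (Suc y)) (- c + f (Suc y - 1))
      \<le> max (f (Suc y)) (- c + f (Suc y - 1)) - max (f (Suc (Suc y))) (- c + f (Suc (Suc y) - 1))"
    using d0 d1 ds by (auto simp: max_def)
qed

lemma decreasing_concave_limit:
  assumes F: "\<And>n. decreasing_concave (F n)" and lim: "\<And>y. (\<lambda>n. F n y) \<longlonglongrightarrow> f y"
  shows "decreasing_concave f"
proof (rule decreasing_concaveI)
  fix y
  have "(\<lambda>n. F n y - F n (Suc y)) \<longlonglongrightarrow> f y - f (Suc y)"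
    and "(\<lambda>n. F n (Suc y) - F n (Suc (Suc y))) \<longlonglongrightarrow> f (Suc y) - f (Suc (Suc y))"
    by (intro tendsto_diff lim)+
  moreover have "0 \<le> F n y - F n (Suc y)"
    and "F n y - F n (Suc y) \<le> F n (Suc y) - F n (Suc (Suc y))" for n
    using decreasing_concaveD[OF F] by blast+
  ultimately show "0 \<le> f y - f (Suc y)" and "f y - f (Suc y) \<le> f (Suc y) - f (Suc (Suc y))"
    by (meson LIMSEQ_le LIMSEQ_le_const)+
qed

lemma abs_max_diff_le:
  fixes a a' b b' E :: real
  shows "\<bar>a - a'\<bar> \<le> E \<Longrightarrow> \<bar>b - b'\<bar> \<le> E \<Longrightarrow> \<bar>max a b - max a' b'\<bar> \<le> E"
  by (auto simp: max_def abs_le_iff)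

lemma abs_scaled_diff_le:
  fixes u u' k E :: real
  shows "\<bar>u - u'\<bar> \<le> E \<Longrightarrow> 0 \<le> k \<Longrightarrow> \<bar>k * u - k * u'\<bar> \<le> k * E"
  by (metis abs_mult abs_of_nonneg mult_left_mono right_diff_distrib)

lemma block_contraction_iterate:
  fixes a :: "nat \<Rightarrow> real"
  assumes \<gamma>: "0 \<le> \<gamma>" and contract: "\<And>n. a (n + J) \<le> \<gamma> * a n"
  shows "a (q * J + r) \<le> \<gamma>^q * a r"
proof (induction q)
  case 0
  then show ?case by simp
next
  case (Suc q)
  have "a (Suc q * J + r) = a ((q * J + r) + J)"
    by (simp add: algebra_simps)
  also have "\<dots> \<le> \<gamma> * a (q * J + r)"
    by (rule contract)
  also have "\<dots> \<le> \<gamma> * (\<gamma>^q * a r)"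
    using Suc.IH \<gamma> by (rule mult_left_mono)
  finally show ?case by simp
qed

text \<open>A nonnegative sequence that contracts by a factor \<gamma> < 1 over every block of J steps
  is summable: it is dominated by a geometric sequence with ratio root J (max \<gamma> (1/2)).\<close>
lemma summable_block_contraction:
  fixes a :: "nat \<Rightarrow> real"
  assumes J: "J > 0" and \<gamma>: "0 \<le> \<gamma>" "\<gamma> < 1" and nonneg: "\<And>n. 0 \<le> a n"
    and contract: "\<And>n. a (n + J) \<le> \<gamma> * a n"
  shows "summable a"
proof -
  define A where "A = Max (a ` {..<J})"
  have below_A: "a r \<le> A" if "r < J" for r
    unfolding A_def using that by (intro Max_ge) auto
  have A_nonneg: "0 \<le> A"
    using below_A[of 0] nonneg[of 0] J by simp
  define g where "g = max \<gamma> (1/2)"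
  have g: "\<gamma> \<le> g" "0 < g" "g < 1"
    using \<gamma> by (auto simp: g_def)
  define \<rho> where "\<rho> = root J g"
  have \<rho>: "0 < \<rho>" "\<rho> < 1" "\<rho> ^ J = g"
    using J g by (auto simp: \<rho>_def real_root_gt_zero)
  have geometric_bound: "a n \<le> (A / \<rho>^J) * \<rho>^n" for n
  proof -
    have "a n = a ((n div J) * J + n mod J)"
      by simp
    also have "\<dots> \<le> \<gamma>^(n div J) * a (n mod J)"
      using \<gamma>(1) contract by (rule block_contraction_iterate)
    also have "\<dots> \<le> g^(n div J) * A"
      using below_A[of "n mod J"] J \<gamma> g nonneg[of "n mod J"] by (intro mult_mono power_mono) auto
    also have "g^(n div J) = \<rho>^(J * (n div J))"
      using \<rho> by (simp add: power_mult)
    also have "\<rho>^(J * (n div J)) \<le> \<rho>^n / \<rho>^J"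
    proof -
      have "n \<le> J * (n div J) + J"
        using J by (metis add.commute div_mult_mod_eq less_imp_le_nat mod_less_divisor mult.commute
            nat_add_left_cancel_le)
      then have "\<rho>^(J * (n div J) + J) \<le> \<rho>^n"
        using \<rho> by (intro power_decreasing) auto
      then show ?thesis
        using \<rho> g by (simp add: power_add pos_le_divide_eq mult.commute)
    qed
    finally show ?thesis
      using A_nonneg \<rho> by (simp add: field_simps mult_right_mono)
  qed
  show ?thesis
    by (rule summable_comparison_test[of _ "\<lambda>n. (A / \<rho>^J) * \<rho>^n"])
      (use nonneg geometric_bound \<rho> in \<open>auto intro!: summable_mult summable_geometric\<close>)
qed

text \<open>For nondecreasing f the set {k. f k \<le> \<theta>} is an initial segment
  and T_f(\<theta>) is its largest element, so k \<le> T_f(\<theta>) holds exactly when f k \<le> \<theta>.\<close>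
lemma Tthr_upper: "f k \<le> \<theta> \<Longrightarrow> ereal (real k) \<le> Tthr f \<theta>"
  unfolding Tthr_def by (auto intro!: Sup_upper)

lemma Tthr_least:
  assumes "\<And>j. f j \<le> \<theta> \<Longrightarrow> ereal (real j) \<le> b" and "-1 \<le> b"
  shows "Tthr f \<theta> \<le> b"
  using assms unfolding Tthr_def by (auto intro!: Sup_least)

lemma Tthr_ge: "-1 \<le> Tthr f \<theta>"
proof (cases "\<exists>k. f k \<le> \<theta>")
  case True
  then obtain k where "f k \<le> \<theta>" by blast
  then have "ereal (real k) \<le> Tthr f \<theta>" by (rule Tthr_upper)
  moreover have "-1 \<le> ereal (real k)" by (simp add: one_ereal_def)
  ultimately show ?thesis by (rule order.trans[rotated])
next
  case False
  then show ?thesis by (simp add: Tthr_def)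
qed

lemma Tthr_iff:
  assumes mono: "\<And>x. f x \<le> f (Suc x)"
  shows "ereal (real k) \<le> Tthr f \<theta> \<longleftrightarrow> f k \<le> \<theta>"
proof
  assume le: "ereal (real k) \<le> Tthr f \<theta>"
  show "f k \<le> \<theta>"
  proof (rule ccontr)
    assume not_k: "\<not> f k \<le> \<theta>"
    have lt: "j < k" if "f j \<le> \<theta>" for j
      using that not_k lift_Suc_mono_le[of f, OF mono, of k j] by (cases "k \<le> j") auto
    have "ereal (real j) \<le> ereal (real k - 1)" if "f j \<le> \<theta>" for j
      using lt[OF that] by simp
    moreover have "-1 \<le> ereal (real k - 1)"
      by (simp add: one_ereal_def)
    ultimately have "Tthr f \<theta> \<le> ereal (real k - 1)"
      by (rule Tthr_least)
    with le have "ereal (real k) \<le> ereal (real k - 1)"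
      by (rule order.trans)
    then show False by simp
  qed
qed (rule Tthr_upper)

lemma Tthr_Suc_iff:
  assumes "\<And>x. f x \<le> f (Suc x)"
  shows "ereal (real (Suc k)) \<le> 1 + Tthr f \<theta> \<longleftrightarrow> f k \<le> \<theta>"
proof -
  have "ereal (real (Suc k)) \<le> 1 + Tthr f \<theta> \<longleftrightarrow> 1 + ereal (real k) \<le> 1 + Tthr f \<theta>"
    by (simp add: one_ereal_def)
  also have "\<dots> \<longleftrightarrow> ereal (real k) \<le> Tthr f \<theta>"
    using ereal_add_le_add_iff[of 1 "ereal (real k)" "Tthr f \<theta>"] by simp
  also have "\<dots> \<longleftrightarrow> f k \<le> \<theta>"
    by (rule Tthr_iff[of f, OF assms])
  finally show ?thesis .
qed

lemma Tthr_cong: "(\<And>k. f k \<le> \<theta> \<longleftrightarrow> g k \<le> \<theta>') \<Longrightarrow> Tthr f \<theta> = Tthr g \<theta>'"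
  unfolding Tthr_def by simp

text \<open>Let S be down-closed and let a be nonnegative with
  a(y) \<le> \<Lambda> M at each y \<in> S whenever M bounds a on S \<inter> {..y+1}.  Then the maximum of a over
  S \<inter> {..k} contracts by \<Lambda> when k increases by one, so iterating bounds a(y) by \<Lambda>^j times
  the maximum over S \<inter> {..y+j}.\<close>
lemma subsolution_iterate:
  fixes a :: "nat \<Rightarrow> real" and S :: "nat \<Rightarrow> bool"
  assumes down: "\<And>x y. S y \<Longrightarrow> x \<le> y \<Longrightarrow> S x" and \<Lambda>: "0 \<le> \<Lambda>"
    and sub: "\<And>y M. S y \<Longrightarrow> (\<And>z. z \<le> Suc y \<Longrightarrow> S z \<Longrightarrow> a z \<le> M) \<Longrightarrow> a y \<le> \<Lambda> * M"
    and y: "S y"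
  shows "a y \<le> \<Lambda>^j * Max (a ` {z. z \<le> y + j \<and> S z})"
proof -
  define m where "m k = Max (a ` {z. z \<le> k \<and> S z})" for k
  have fin: "finite {z. z \<le> k \<and> S z}" for k
    by simp
  have ne: "{z. z \<le> k \<and> S z} \<noteq> {}" for k
    using down[OF y] by auto
  have below_m: "a z \<le> m k" if "z \<le> k" "S z" for z k
    unfolding m_def using that fin by (intro Max_ge) auto
  have m_mono: "m k \<le> m (Suc k)" for k
    unfolding m_def using fin ne by (intro Max_mono) auto
  have m_step: "m k \<le> \<Lambda> * m (Suc k)" for k
  proof -
    have "a z \<le> \<Lambda> * m (Suc k)" if "z \<le> k" "S z" for z
    proof -
      have "a z \<le> \<Lambda> * m (Suc z)"
        by (rule sub[OF \<open>S z\<close>]) (rule below_m)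
      also have "\<dots> \<le> \<Lambda> * m (Suc k)"
        using lift_Suc_mono_le[of m, OF m_mono] \<open>z \<le> k\<close> \<Lambda> by (simp add: mult_left_mono)
      finally show ?thesis .
    qed
    then show ?thesis
      unfolding m_def[of k] using fin ne by (subst Max_le_iff) auto
  qed
  show ?thesis
    unfolding m_def[symmetric]
  proof (induction j)
    case 0
    then show ?case using below_m[OF _ y] by simp
  next
    case (Suc j)
    have "\<Lambda>^j * m (y + j) \<le> \<Lambda>^j * (\<Lambda> * m (Suc (y + j)))"
      using m_step \<Lambda> by (simp add: mult_left_mono)
    with Suc.IH show ?case by (simp add: algebra_simps)
  qed
qed

lemma subsolution_vanishes:
  fixes a b :: "nat \<Rightarrow> real" and S :: "nat \<Rightarrow> bool"
  assumes down: "\<And>x y. S y \<Longrightarrow> x \<le> y \<Longrightarrow> S x"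
    and nonneg: "\<And>y. 0 \<le> a y" and \<Lambda>: "0 \<le> \<Lambda>"
    and sub: "\<And>y M. S y \<Longrightarrow> (\<And>z. z \<le> Suc y \<Longrightarrow> S z \<Longrightarrow> a z \<le> M) \<Longrightarrow> a y \<le> \<Lambda> * M"
    and growth: "\<And>y k. y \<le> k \<Longrightarrow> a y \<le> b k"
    and decay: "(\<lambda>j. \<Lambda>^j * b (y + j)) \<longlonglongrightarrow> 0"
    and y: "S y"
  shows "a y = 0"
proof -
  have "a y \<le> \<Lambda>^j * b (y + j)" for j
  proof -
    have "a y \<le> \<Lambda>^j * Max (a ` {z. z \<le> y + j \<and> S z})"
      using down \<Lambda> sub y by (rule subsolution_iterate)
    also have "\<dots> \<le> \<Lambda>^j * b (y + j)"
      using down[OF y] growth \<Lambda> by (intro mult_left_mono) (subst Max_le_iff, auto)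
    finally show ?thesis .
  qed
  then have "a y \<le> 0"
    by (intro LIMSEQ_le_const[OF decay]) auto
  with nonneg[of y] show ?thesis by simp
qed

lemma down_closed_boundary:
  fixes S :: "nat \<Rightarrow> bool"
  assumes "S 0" and "\<not> S (Suc k)"
  obtains N where "N \<le> k" and "S N" and "\<not> S (Suc N)"
  using assms by (induction k) (auto intro: le_SucI)

text \<open>The model parameters with the standing assumptions of the paper (except Assumption 1);
  \<delta> = \<mu>_h - \<mu>_l and \<Lambda> = \<lambda> + \<mu>_h = 1 - \<beta> is the total uniformized event rate, and vn fl n
  is the n-stage value (fl = True: combined problem, fl = False: subproblem).\<close>
locale queue_control =
  fixes lam mul muh R c \<beta> :: real and h :: "nat \<Rightarrow> real"
  assumes lam_pos: "lam > 0" and mul_pos: "0 < mul" and mul_less_muh: "mul < muh"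
    and R_nonneg: "R \<ge> 0" and c_pos: "c > 0" and beta_pos: "\<beta> > 0"
    and rates_sum: "lam + muh + \<beta> = 1"
    and h_mono: "mono h" and h_convex: "\<And>x. h (x+1) - h x \<le> h (x+2) - h (x+1)"
    and h_zero: "h 0 = 0"
begin

abbreviation \<delta> :: real where "\<delta> \<equiv> muh - mul"
abbreviation \<Lambda> :: real where "\<Lambda> \<equiv> lam + muh"
abbreviation vn :: "bool \<Rightarrow> nat \<Rightarrow> nat \<times> nat \<Rightarrow> real" where
  "vn fl \<equiv> vval fl lam mul muh R c h"

lemma delta_pos: "0 < \<delta>"
  using mul_less_muh by simp

lemma Lambda_nonneg: "0 \<le> \<Lambda>"
  using lam_pos mul_pos mul_less_muh by simp

lemma Lambda_eq: "\<Lambda> = 1 - \<beta>"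
  using rates_sum by simp

lemma h_nonneg: "0 \<le> h x"
  using h_mono h_zero by (metis le0 monoD)

lemma h_le: "x \<le> y \<Longrightarrow> h x \<le> h y"
  using h_mono by (rule monoD)

text \<open>Thanks to h 0 = 0 and c > 0, the recursion at (x,0) has the same shape at x = 0 as
  elsewhere (with x - 1 = 0), so no case distinction on x is needed later.\<close>
lemma vn_Suc_0:
  "vn fl (Suc n) (x,0) = - h x + lam * vn fl n (x,1) + mul * vn fl n (x-1,0)
     + (if fl then max (\<delta> * vn fl n (x,0)) (- c + \<delta> * vn fl n (x-1,0)) else \<delta> * vn fl n (x,0))"
  using h_zero c_pos by (auto simp: Let_def algebra_simps)

lemma vn_Suc_1:
  "i \<noteq> 0 \<Longrightarrow> vn fl (Suc n) (x,i) = max (R + vn fl (Suc n) (x+1,0)) (vn fl (Suc n) (x,0))"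
  by (simp add: Let_def)

declare vval.simps(2) [simp del]

lemma decreasing_concave_neg_h: "decreasing_concave (\<lambda>y. - h y)"
  using h_convex h_le by (intro decreasing_concaveI) (simp_all add: numeral_2_eq_2)

lemma vn_1_decreasing_concave:
  assumes "decreasing_concave (\<lambda>y. vn fl n (y,0))"
  shows "decreasing_concave (\<lambda>y. vn fl n (y,1))"
proof (cases n)
  case 0
  then show ?thesis by (simp add: decreasing_concave_const)
next
  case (Suc m)
  then show ?thesis
    using decreasing_concave_admission[OF assms, of R] by (simp add: vn_Suc_1)
qed

lemma vn_decreasing_concave: "decreasing_concave (\<lambda>y. vn fl n (y,0))"
proof (induction n)
  case 0
  then show ?case by (simp add: decreasing_concave_const)
next
  case (Suc n)
  define f where "f = (\<lambda>y. vn fl n (y,0))"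
  have f: "decreasing_concave f"
    using Suc.IH by (simp add: f_def)
  have service: "decreasing_concave (\<lambda>y. if fl then max (\<delta> * f y) (- c + \<delta> * f (y-1)) else \<delta> * f y)"
    using decreasing_concave_rate_choice[OF decreasing_concave_scale[OF f]]
      decreasing_concave_scale[OF f] delta_pos by (cases fl) auto
  have "decreasing_concave (\<lambda>y. - h y + lam * vn fl n (y,1) + mul * f (y-1)
          + (if fl then max (\<delta> * f y) (- c + \<delta> * f (y-1)) else \<delta> * f y))"
    using lam_pos mul_pos vn_1_decreasing_concave[OF Suc.IH]
    by (intro decreasing_concave_add decreasing_concave_neg_h decreasing_concave_scale
        decreasing_concave_shift service f) auto
  then show ?case
    unfolding vn_Suc_0 f_def .
qed

text \<open>Being offered an arrival never hurts, since it may be rejected.\<close>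
lemma vn_0_le_1: "vn fl n (x,0) \<le> vn fl n (x,Suc 0)"
  by (cases n) (simp_all add: vn_Suc_1)

lemma vn_flexibility_gain: "vn False n s \<le> vn True n s"
proof (induction n arbitrary: s)
  case 0
  then show ?case by simp
next
  case (Suc n)
  have at_0: "vn False (Suc n) (y,0) \<le> vn True (Suc n) (y,0)" for y
  proof -
    have "lam * vn False n (y,1) \<le> lam * vn True n (y,1)"
      and "mul * vn False n (y-1,0) \<le> mul * vn True n (y-1,0)"
      and "\<delta> * vn False n (y,0) \<le> \<delta> * vn True n (y,0)"
      using Suc.IH lam_pos mul_pos delta_pos by (simp_all add: mult_left_mono)
    then show ?thesis
      by (simp add: vn_Suc_0)
  qed
  obtain x i where s: "s = (x,i)" by fastforce
  show ?case
    using at_0[of x] at_0[of "x+1"] by (cases "i = 0") (auto simp: s vn_Suc_1 max_def)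
qed

text \<open>Profits are bounded by the discounted reward stream R + \<Lambda> R + \<Lambda>^2 R + ... = R / \<beta>.\<close>
lemma vn_upper: "vn fl n s \<le> R / \<beta>"
proof (induction n arbitrary: s)
  case 0
  then show ?case using R_nonneg beta_pos by simp
next
  case (Suc n)
  have at_0: "vn fl (Suc n) (y,0) \<le> \<Lambda> * (R / \<beta>)" for y
  proof -
    have scaled: "k * vn fl n s \<le> k * (R / \<beta>)" if "0 \<le> k" for k s
      using Suc.IH that by (rule mult_left_mono)
    have "lam * vn fl n (y,1) \<le> lam * (R / \<beta>)" "mul * vn fl n (y-1,0) \<le> mul * (R / \<beta>)"
      "\<delta> * vn fl n (y,0) \<le> \<delta> * (R / \<beta>)" "\<delta> * vn fl n (y-1,0) \<le> \<delta> * (R / \<beta>)"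
      by - (rule scaled, use lam_pos mul_pos delta_pos in simp)+
    then have "vn fl (Suc n) (y,0) \<le> lam * (R / \<beta>) + mul * (R / \<beta>) + \<delta> * (R / \<beta>)"
      using c_pos h_nonneg[of y] by (auto simp: vn_Suc_0)
    also have "\<dots> = \<Lambda> * (R / \<beta>)"
      by (simp add: left_diff_distrib distrib_right add_divide_distrib diff_divide_distrib)
    finally show ?thesis .
  qed
  have "R + \<Lambda> * (R / \<beta>) = R / \<beta>" and "\<Lambda> * (R / \<beta>) \<le> R / \<beta>"
    using beta_pos R_nonneg by (simp_all add: Lambda_eq field_simps)
  moreover obtain x i where "s = (x,i)" by fastforce
  ultimately show ?case
    using at_0[of x] at_0[of "x+1"] by (cases "i = 0") (auto simp: vn_Suc_1)
qed

text \<open>Without ever using the high rate, the holding cost h x paid forever bounds the loss.\<close>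
lemma vn_lower: "- h x / \<beta> \<le> vn False n (x,0)"
proof (induction n arbitrary: x)
  case 0
  then show ?case using h_nonneg beta_pos by simp
next
  case (Suc n)
  have "- h x / \<beta> \<le> - h (x-1) / \<beta>"
    using h_le[of "x-1" x] beta_pos by (simp add: divide_right_mono)
  then have "- h x / \<beta> \<le> vn False n (x,1)" and "- h x / \<beta> \<le> vn False n (x-1,0)"
    and "- h x / \<beta> \<le> vn False n (x,0)"
    using Suc.IH[of x] Suc.IH[of "x-1"] vn_0_le_1[of False n x] by auto
  then have "lam * (- h x / \<beta>) \<le> lam * vn False n (x,1)"
    and "mul * (- h x / \<beta>) \<le> mul * vn False n (x-1,0)"
    and "\<delta> * (- h x / \<beta>) \<le> \<delta> * vn False n (x,0)"
    by - (rule mult_left_mono, assumption, use lam_pos mul_pos delta_pos in simp)+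
  then have "- h x + lam * (- h x / \<beta>) + mul * (- h x / \<beta>) + \<delta> * (- h x / \<beta>)
      \<le> vn False (Suc n) (x,0)"
    by (simp add: vn_Suc_0)
  moreover have "- h x + lam * (- h x / \<beta>) + mul * (- h x / \<beta>) + \<delta> * (- h x / \<beta>)
      = - h x + \<Lambda> * (- h x / \<beta>)"
    by (simp add: left_diff_distrib distrib_right add_divide_distrib diff_divide_distrib)
  moreover have "- h x + \<Lambda> * (- h x / \<beta>) = - h x / \<beta>"
    using beta_pos by (simp add: Lambda_eq field_simps)
  ultimately show ?case by simp
qed

text \<open>One Bellman step at an (x,0)-state mixes the values at (x,1), (x-1,0), (x,0) with
  total weight \<Lambda>, so it shrinks differences by the factor \<Lambda>.\<close>
lemma increment_step_0:
  assumes "\<bar>vn fl (Suc n) (y,1) - vn fl n (y,1)\<bar> \<le> D"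
    and "\<bar>vn fl (Suc n) (y-1,0) - vn fl n (y-1,0)\<bar> \<le> D"
    and "\<bar>vn fl (Suc n) (y,0) - vn fl n (y,0)\<bar> \<le> D"
  shows "\<bar>vn fl (Suc (Suc n)) (y,0) - vn fl (Suc n) (y,0)\<bar> \<le> \<Lambda> * D"
proof -
  note scaled = abs_scaled_diff_le[OF _ less_imp_le]
  have arrival: "\<bar>lam * vn fl (Suc n) (y,1) - lam * vn fl n (y,1)\<bar> \<le> lam * D"
    using scaled[OF assms(1) lam_pos] .
  have low: "\<bar>mul * vn fl (Suc n) (y-1,0) - mul * vn fl n (y-1,0)\<bar> \<le> mul * D"
    using scaled[OF assms(2) mul_pos] .
  have stay: "\<bar>\<delta> * vn fl (Suc n) (y,0) - \<delta> * vn fl n (y,0)\<bar> \<le> \<delta> * D"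
    using scaled[OF assms(3) delta_pos] .
  have fast: "\<bar>(- c + \<delta> * vn fl (Suc n) (y-1,0)) - (- c + \<delta> * vn fl n (y-1,0))\<bar> \<le> \<delta> * D"
    using scaled[OF assms(2) delta_pos] by simp
  have service:
    "\<bar>(if fl then max (\<delta> * vn fl (Suc n) (y,0)) (- c + \<delta> * vn fl (Suc n) (y-1,0)) else \<delta> * vn fl (Suc n) (y,0))
      - (if fl then max (\<delta> * vn fl n (y,0)) (- c + \<delta> * vn fl n (y-1,0)) else \<delta> * vn fl n (y,0))\<bar> \<le> \<delta> * D"
    using abs_max_diff_le[OF stay fast] stay by (cases fl) simp_all
  have "\<bar>vn fl (Suc (Suc n)) (y,0) - vn fl (Suc n) (y,0)\<bar> \<le> lam * D + mul * D + \<delta> * D"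
    using arrival low service by (simp only: vn_Suc_0[of fl "Suc n"] vn_Suc_0[of fl n]) (simp add: abs_le_iff)
  also have "\<dots> = \<Lambda> * D"
    by (simp add: algebra_simps)
  finally show ?thesis .
qed

lemma increment_step_1:
  assumes "i \<noteq> 0"
    and "\<bar>vn fl (Suc (Suc n)) (y+1,0) - vn fl (Suc n) (y+1,0)\<bar> \<le> D"
    and "\<bar>vn fl (Suc (Suc n)) (y,0) - vn fl (Suc n) (y,0)\<bar> \<le> D"
  shows "\<bar>vn fl (Suc (Suc n)) (y,i) - vn fl (Suc n) (y,i)\<bar> \<le> D"
  using abs_max_diff_le[of "R + vn fl (Suc (Suc n)) (y+1,0)" "R + vn fl (Suc n) (y+1,0)" D] assms
  by (simp add: vn_Suc_1)

lemma weight_mono: "x \<le> x' \<Longrightarrow> \<Lambda>^k * (r + h x) \<le> \<Lambda>^k * (r + h x')"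
  using Lambda_nonneg by (simp add: h_le mult_left_mono)

text \<open>The increments of value iteration decay like \<Lambda>^n, up to the growth of the holding
  cost over the n states reachable in n steps.\<close>
lemma increment_bound:
  "\<bar>vn fl (Suc n) (y,0) - vn fl n (y,0)\<bar> \<le> \<Lambda>^n * (R + h (y+n+1))
   \<and> (i \<noteq> 0 \<longrightarrow> \<bar>vn fl (Suc n) (y,i) - vn fl n (y,i)\<bar> \<le> \<Lambda>^n * (R + h (y+n+2)))"
proof (induction n arbitrary: y i)
  case 0
  have first: "vn fl (Suc 0) (z,0) = - h z" for z
    using c_pos by (simp add: vn_Suc_0)
  have "h y \<le> h (y+1)" "h (y+1) \<le> h (y+2)"
    by (simp_all add: h_le)
  then show ?case
    using first[of y] first[of "y+1"] h_nonneg[of y] R_nonneg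
    by (auto simp: vn_Suc_1 abs_le_iff max_def)
next
  case (Suc n)
  have at_0: "\<bar>vn fl (Suc (Suc n)) (z,0) - vn fl (Suc n) (z,0)\<bar> \<le> \<Lambda>^Suc n * (R + h (z + Suc n + 1))"
    for z
  proof -
    have "\<bar>vn fl (Suc (Suc n)) (z,0) - vn fl (Suc n) (z,0)\<bar> \<le> \<Lambda> * (\<Lambda>^n * (R + h (z+n+2)))"
    proof (rule increment_step_0)
      show "\<bar>vn fl (Suc n) (z,1) - vn fl n (z,1)\<bar> \<le> \<Lambda>^n * (R + h (z+n+2))"
        using Suc.IH[of z 1] by simp
      show "\<bar>vn fl (Suc n) (z-1,0) - vn fl n (z-1,0)\<bar> \<le> \<Lambda>^n * (R + h (z+n+2))"
        using order.trans[OF conjunct1[OF Suc.IH[of "z-1"]] weight_mono] by simp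
      show "\<bar>vn fl (Suc n) (z,0) - vn fl n (z,0)\<bar> \<le> \<Lambda>^n * (R + h (z+n+2))"
        using order.trans[OF conjunct1[OF Suc.IH[of z]] weight_mono] by simp
    qed
    then show ?thesis by (simp add: algebra_simps)
  qed
  have "i \<noteq> 0 \<longrightarrow> \<bar>vn fl (Suc (Suc n)) (y,i) - vn fl (Suc n) (y,i)\<bar> \<le> \<Lambda>^Suc n * (R + h (y + Suc n + 2))"
    using at_0[of "y+1"] order.trans[OF at_0[of y] weight_mono[of "y + Suc n + 1" "y + Suc n + 2"]]
    by (auto intro: increment_step_1 simp: algebra_simps)
  then show ?case
    using at_0[of y] by simp
qed

text \<open>The same bound in a form uniform in the state index, matching Assumption 1.\<close>
lemma increment_bound_uniform:
  "\<bar>vn fl (Suc n) (y,i) - vn fl n (y,i)\<bar> \<le> \<Lambda>^n * (R + c + h ((y + 2) + n))"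
proof -
  have "\<bar>vn fl (Suc n) (y,i) - vn fl n (y,i)\<bar> \<le> \<Lambda>^n * (R + h (y + n + 2))"
    using increment_bound[of fl n y i] order.trans[OF conjunct1[OF increment_bound] weight_mono]
    by (cases "i = 0") auto
  also have "\<dots> \<le> \<Lambda>^n * (R + c + h ((y + 2) + n))"
    using c_pos Lambda_nonneg by (simp add: algebra_simps)
  finally show ?thesis .
qed

end

locale queue_control_A1 = queue_control +
  assumes assumption1: "Assumption1 lam mul muh R c \<beta> h"
begin

abbreviation v :: "bool \<Rightarrow> nat \<times> nat \<Rightarrow> real" where
  "v fl \<equiv> vinf fl lam mul muh R c h"

text \<open>Assumption 1(2), with the normalization \<Lambda> + \<beta> = 1, is exactly the block contraction
  needed for the discounted future holding costs to be summable.\<close>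
lemma tail_summable: "summable (\<lambda>n. \<Lambda>^n * (R + c + h (x + n)))"
proof -
  obtain \<gamma> J where \<gamma>: "0 \<le> \<gamma>" "\<gamma> < 1" and J: "J > 0"
    and contract: "\<And>x. \<Lambda>^J * (R + c + h (x + J)) \<le> \<gamma> * (R + c + h x)"
    using assumption1 rates_sum unfolding Assumption1_def by auto
  show ?thesis
  proof (rule summable_block_contraction[OF J \<gamma>])
    show "0 \<le> \<Lambda>^n * (R + c + h (x + n))" for n
      using Lambda_nonneg R_nonneg c_pos h_nonneg[of "x + n"] by simp
    show "\<Lambda>^(n + J) * (R + c + h (x + (n + J))) \<le> \<gamma> * (\<Lambda>^n * (R + c + h (x + n)))" for n
    proof -
      have "\<Lambda>^(n + J) * (R + c + h (x + (n + J))) = \<Lambda>^n * (\<Lambda>^J * (R + c + h ((x + n) + J)))"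
        by (simp add: power_add algebra_simps)
      also have "\<dots> \<le> \<Lambda>^n * (\<gamma> * (R + c + h (x + n)))"
        using contract[of "x + n"] Lambda_nonneg by (intro mult_left_mono) auto
      finally show ?thesis
        by (simp add: algebra_simps)
    qed
  qed
qed

lemma tail_vanishes: "(\<lambda>n. \<Lambda>^n * (R + c + h (x + n))) \<longlonglongrightarrow> 0"
  using tail_summable by (rule summable_LIMSEQ_zero)

text \<open>Value iteration converges: its increments are summable.\<close>
lemma vn_converges: "(\<lambda>n. vn fl n s) \<longlonglongrightarrow> v fl s"
proof -
  obtain x i where s: "s = (x,i)" by fastforce
  define d where "d k = vn fl (Suc k) s - vn fl k s" for k
  have "summable d"
  proof (rule summable_comparison_test)
    show "summable (\<lambda>n. \<Lambda>^n * (R + c + h ((x + 2) + n)))"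
      by (rule tail_summable)
    show "\<exists>N. \<forall>n\<ge>N. norm (d n) \<le> \<Lambda>^n * (R + c + h ((x + 2) + n))"
      using increment_bound_uniform by (auto simp: d_def s)
  qed
  moreover have "(\<Sum>k<n. d k) = vn fl n s" for n
    unfolding d_def using sum_lessThan_telescope[of "\<lambda>k. vn fl k s" n] by simp
  ultimately have "(\<lambda>n. vn fl n s) \<longlonglongrightarrow> suminf d"
    using summable_LIMSEQ by fastforce
  then show ?thesis
    unfolding vinf_def by (simp add: limI)
qed

lemma vn_Suc_converges: "(\<lambda>n. vn fl (Suc n) s) \<longlonglongrightarrow> v fl s"
  using vn_converges by (rule LIMSEQ_Suc)

lemma v_bellman_0:
  "v fl (x,0) = - h x + lam * v fl (x,1) + mul * v fl (x-1,0)
     + (if fl then max (\<delta> * v fl (x,0)) (- c + \<delta> * v fl (x-1,0)) else \<delta> * v fl (x,0))"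
proof -
  have "(\<lambda>n. vn fl (Suc n) (x,0)) \<longlonglongrightarrow> - h x + lam * v fl (x,1) + mul * v fl (x-1,0)
     + (if fl then max (\<delta> * v fl (x,0)) (- c + \<delta> * v fl (x-1,0)) else \<delta> * v fl (x,0))"
    unfolding vn_Suc_0 by (cases fl) (simp_all, (intro tendsto_intros vn_converges)+)
  then show ?thesis
    using vn_Suc_converges LIMSEQ_unique by blast
qed

lemma v_bellman_1: "i \<noteq> 0 \<Longrightarrow> v fl (x,i) = max (R + v fl (x+1,0)) (v fl (x,0))"
proof -
  assume i: "i \<noteq> 0"
  have "(\<lambda>n. vn fl (Suc n) (x,i)) \<longlonglongrightarrow> max (R + v fl (x+1,0)) (v fl (x,0))"
    unfolding vn_Suc_1[OF i] by (intro tendsto_intros vn_Suc_converges)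
  then show ?thesis
    using vn_Suc_converges LIMSEQ_unique by blast
qed

text \<open>All states (x,i) with i \<noteq> 0 encode the arrival state (x,1).\<close>
lemma v_arrival_index: "i \<noteq> 0 \<Longrightarrow> v fl (x,i) = v fl (x,1)"
  using v_bellman_1[of i fl x] v_bellman_1[of 1 fl x] by simp

lemma v_decreasing_concave: "decreasing_concave (\<lambda>y. v fl (y,0))"
  using vn_decreasing_concave vn_converges by (rule decreasing_concave_limit)

lemma v_flexibility_gain: "v False s \<le> v True s"
  by (rule LIMSEQ_le[OF vn_converges vn_converges]) (simp add: vn_flexibility_gain)

lemma v_upper: "v fl s \<le> R / \<beta>"
  by (rule LIMSEQ_le_const2[OF vn_converges]) (simp add: vn_upper)

lemma v_lower: "- h x / \<beta> \<le> v False (x,0)"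
  by (rule LIMSEQ_le_const[OF vn_converges]) (use vn_lower in blast)

abbreviation flex :: "nat \<times> nat \<Rightarrow> real" where
  "flex s \<equiv> v True s - v False s"

abbreviation B_s :: ereal where
  "B_s \<equiv> 1 + Tthr (Delta0 (v True)) (c / \<delta>)"

abbreviation B_d :: ereal where
  "B_d \<equiv> Tthr (Delta0 (v True)) R"

abbreviation below_Bs :: "nat \<Rightarrow> bool" where
  "below_Bs x \<equiv> ereal (real x) \<le> B_s"

lemma Delta0_mono: "Delta0 (v fl) k \<le> Delta0 (v fl) (Suc k)"
  using decreasing_concaveD(2)[OF v_decreasing_concave, of fl k] by (simp add: Delta0_def)

lemma flex_nonneg: "0 \<le> flex s"
  using v_flexibility_gain[of s] by simp

lemma flex_growth: "flex (x,0) \<le> (R + c + h x) / \<beta>"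
  using v_upper[of True "(x,0)"] v_lower[of x] c_pos beta_pos by (simp add: field_simps)

text \<open>Where the combined problem serves at the low rate, both problems obey the same
  equation, so \<epsilon>(x,0) satisfies it with the holding cost cancelled.\<close>
lemma flex_low_rate:
  assumes low: "0 < x \<Longrightarrow> Delta0 (v True) (x - 1) \<le> c / \<delta>"
  shows "flex (x,0) = lam * flex (x,1) + mul * flex (x-1,0) + \<delta> * flex (x,0)"
proof -
  have "max (\<delta> * v True (x,0)) (- c + \<delta> * v True (x-1,0)) = \<delta> * v True (x,0)"
  proof (cases x)
    case 0
    then show ?thesis using c_pos by simp
  next
    case (Suc y)
    then have "\<delta> * (v True (y,0) - v True (x,0)) \<le> c"
      using low delta_pos by (simp add: Delta0_def pos_le_divide_eq mult.commute)
    then show ?thesis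
      using Suc by (simp add: max_def algebra_simps)
  qed
  then have "v True (x,0) = - h x + lam * v True (x,1) + mul * v True (x-1,0) + \<delta> * v True (x,0)"
    using v_bellman_0[of True x] by simp
  moreover have "v False (x,0) = - h x + lam * v False (x,1) + mul * v False (x-1,0) + \<delta> * v False (x,0)"
    using v_bellman_0[of False x] by simp
  ultimately show ?thesis
    unfolding right_diff_distrib by linarith
qed

lemma flex_admit: "flex (x,1) \<le> max (flex (x,0)) (flex (Suc x,0))"
  using v_bellman_1[of 1 True x] v_bellman_1[of 1 False x] by (auto simp: max_def)

lemma flex_reject: "R < Delta0 (v True) x \<Longrightarrow> flex (x,1) \<le> flex (x,0)"
  using v_bellman_1[of 1 True x] v_bellman_1[of 1 False x] by (auto simp: Delta0_def max_def)

lemma below_Bs_0: "below_Bs 0"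
  using Tthr_ge[of "Delta0 (v True)" "c / \<delta>"]
  by (cases "Tthr (Delta0 (v True)) (c / \<delta>)") (auto simp: one_ereal_def)

lemma below_Bs_down: "below_Bs y \<Longrightarrow> z \<le> y \<Longrightarrow> below_Bs z"
  by (erule order.trans[rotated]) simp

text \<open>Below B^s the low rate is optimal in the combined problem.\<close>
lemma below_Bs_low_rate: "below_Bs (Suc x) \<Longrightarrow> Delta0 (v True) x \<le> c / \<delta>"
  using Tthr_Suc_iff[of "Delta0 (v True)", OF Delta0_mono] by blast

lemma below_Bs_reject:
  assumes order: "B_d + 1 \<le> B_s" and beyond: "\<not> below_Bs (Suc x)"
  shows "R < Delta0 (v True) x"
proof (rule ccontr)
  assume "\<not> R < Delta0 (v True) x"
  then have "ereal (real (Suc x)) \<le> 1 + B_d"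
    using Tthr_Suc_iff[of "Delta0 (v True)", OF Delta0_mono] by simp
  also have "\<dots> \<le> B_s"
    using order by (simp add: add.commute)
  finally show False
    using beyond by simp
qed

text \<open>The local inequalities that feed the maximum principle: on {x. x \<le> B^s} the function
  \<epsilon>(\<cdot>,0) is a subsolution with factor \<Lambda>.\<close>
lemma flex_admission_bound:
  assumes order: "B_d + 1 \<le> B_s" and "below_Bs y"
    and bound: "\<And>z. z \<le> Suc y \<Longrightarrow> below_Bs z \<Longrightarrow> flex (z,0) \<le> M"
  shows "flex (y,1) \<le> M"
proof (cases "below_Bs (Suc y)")
  case True
  then show ?thesis
    using flex_admit[of y] bound[of y] bound[of "Suc y"] \<open>below_Bs y\<close> by simp
next
  case False
  then show ?thesis
    using flex_reject[OF below_Bs_reject[OF order False]] bound[of y] \<open>below_Bs y\<close> by simp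
qed

lemma flex_subsolution:
  assumes order: "B_d + 1 \<le> B_s" and y: "below_Bs y"
    and bound: "\<And>z. z \<le> Suc y \<Longrightarrow> below_Bs z \<Longrightarrow> flex (z,0) \<le> M"
  shows "flex (y,0) \<le> \<Lambda> * M"
proof -
  have "flex (y,0) = lam * flex (y,1) + mul * flex (y-1,0) + \<delta> * flex (y,0)"
    using y by (intro flex_low_rate below_Bs_low_rate) simp
  also have "\<dots> \<le> lam * M + mul * M + \<delta> * M"
    using flex_admission_bound[OF order y bound] bound[of "y-1"] bound[of y] below_Bs_down[OF y]
      lam_pos mul_pos delta_pos
    by (intro add_mono mult_left_mono) auto
  also have "\<dots> = \<Lambda> * M"
    by (simp add: algebra_simps)
  finally show ?thesis .
qed

lemma flexibility_vanishes:
  assumes order: "B_d + 1 \<le> B_s" and x: "below_Bs x"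
  shows "flex (x,i) = 0"
proof -
  have growth: "flex (z,0) \<le> (R + c + h k) / \<beta>" if "z \<le> k" for z k
    by (rule order.trans[OF flex_growth divide_right_mono]) (use h_le[OF that] beta_pos in auto)
  have decay: "(\<lambda>j. \<Lambda>^j * ((R + c + h (y + j)) / \<beta>)) \<longlonglongrightarrow> 0" for y
    using tendsto_divide_zero[OF tail_vanishes[of y], of \<beta>] by simp
  have zero: "flex (y,0) = 0" if "below_Bs y" for y
    by (rule subsolution_vanishes[of below_Bs "\<lambda>z. flex (z,0)" \<Lambda> "\<lambda>k. (R + c + h k) / \<beta>" y])
      (fact below_Bs_down flex_nonneg Lambda_nonneg flex_subsolution[OF order] growth decay that)+
  show ?thesis
  proof (cases "i = 0")
    case True
    then show ?thesis using zero[OF x] by simp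
  next
    case False
    have "flex (x,1) \<le> 0"
      by (rule flex_admission_bound[OF order x]) (simp add: zero)
    then show ?thesis
      using flex_nonneg[of "(x,1)"] v_arrival_index[OF False] by simp
  qed
qed

text \<open>Consequently the admission thresholds coincide: below B^s the two \<Delta>'s agree, and beyond
  B^s both exceed R (for the subproblem by monotonicity of \<Delta>, starting from the last state
  below B^s, where the subproblem's \<Delta> dominates that of the combined problem).\<close>
lemma admission_thresholds_agree:
  assumes order: "B_d + 1 \<le> B_s"
  shows "Tthr (Delta0 (v False)) R = B_d"
proof (rule Tthr_cong)
  fix k
  show "Delta0 (v False) k \<le> R \<longleftrightarrow> Delta0 (v True) k \<le> R"
  proof (cases "below_Bs (Suc k)")
    case True
    moreover have "below_Bs k"
      using below_Bs_down[OF True] by simp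
    ultimately have "flex (k,0) = 0" and "flex (Suc k,0) = 0"
      using flexibility_vanishes[OF order] by blast+
    then show ?thesis by (simp add: Delta0_def)
  next
    case False
    then obtain N where N: "N \<le> k" "below_Bs N" "\<not> below_Bs (Suc N)"
      using down_closed_boundary[of below_Bs k] below_Bs_0 by blast
    have "R < Delta0 (v True) N"
      using below_Bs_reject[OF order N(3)] .
    also have "\<dots> \<le> Delta0 (v False) N"
      using flexibility_vanishes[OF order N(2), of 0] flex_nonneg[of "(Suc N,0)"] by (simp add: Delta0_def)
    also have "\<dots> \<le> Delta0 (v False) k"
      using N(1) by (rule lift_Suc_mono_le[of "Delta0 (v False)", OF Delta0_mono])
    finally show ?thesis
      using below_Bs_reject[OF order False] by simp
  qed
qed

end

theorem proposition2:
  fixes lam mul muh R c \<beta> :: real and h :: "nat \<Rightarrow> real"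
  assumes "lam > 0" and "0 < mul" and "mul < muh" and "R \<ge> 0" and "c > 0"
    and "\<beta> > 0" and "lam + muh + \<beta> = 1"
    and "mono h" and "\<And>x. h (x+1) - h x \<le> h (x+2) - h (x+1)" and "h 0 = 0"
    and "Assumption1 lam mul muh R c \<beta> h"
    and "1 + Tthr (Delta0 (vinf True lam mul muh R c h)) (c / (muh - mul))
           \<ge> Tthr (Delta0 (vinf True lam mul muh R c h)) R + 1"
  shows "Tthr (Delta0 (vinf False lam mul muh R c h)) R
           = Tthr (Delta0 (vinf True lam mul muh R c h)) R
         \<and> (\<forall>i\<in>{0,1}. \<forall>x::nat.
              ereal (real x) \<le> 1 + Tthr (Delta0 (vinf True lam mul muh R c h)) (c / (muh - mul))
              \<longrightarrow> vinf True lam mul muh R c h (x,i) - vinf False lam mul muh R c h (x,i) = 0)"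
proof -
  interpret queue_control_A1 lam mul muh R c \<beta> h
    by unfold_locales (fact assms)+
  have order: "B_d + 1 \<le> B_s"
    using assms(12) .
  have "Tthr (Delta0 (v False)) R = B_d"
    using order by (rule admission_thresholds_agree)
  moreover have "\<forall>i\<in>{0,1}. \<forall>x. below_Bs x \<longrightarrow> flex (x,i) = 0"
    using flexibility_vanishes[OF order] by blast
  ultimately show ?thesis
    by (rule conjI)
qed

end
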